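(* Let $m,n\in\mathbb N$. The truncation map $\mathfrak{Tr}_{n+1,n}:\widehat{\mathcal E}^{m|n+1}_+\to\widehat{\mathcal E}^{m|n}_+$ commutes with the bar involutions.
   Context: $\mathcal U=U_q(\mathfrak{sl}(\infty))$ over $\mathbb Q(q)$ generated by $E_a,F_a,K_{a,a+1}^{\pm1}$ ($a\in\mathbb Z$), comultiplication $\Delta(E_a)=1\otimes E_a+E_a\otimes K_{a,a+1}^{-1}$, $\Delta(F_a)=F_a\otimes1+K_{a,a+1}\otimes F_a$; bar map $\bar q=q^{-1}$, fixing $E_a,F_a$, inverting $K_{a,a+1}$. $\Lambda^m\mathbb V$: basis $v_{a_1}\wedge\cdots\wedge v_{a_m}$ ($a_1>\cdots>a_m$); for index set $S$, $F_a$ replaces $a$ by $a+1$ if $a\in S,a+1\notin S$ (else $0$), $E_a$ replaces $a+1$ by $a$ if $a+1\in S,a\notin S$ (else $0$), $K_{a,a+1}$ acts by $q^{[a\in S]-[a+1\in S]}$. $\Lambda^n\mathbb W$: basis $w_{b_1}\wedge\cdots\wedge w_{b_n}$ ($b_1<\cdots<b_n$); $F_a$ replaces $a+1$ by $a$ if $a+1\in S,a\notin S$ (else $0$), $E_a$ replaces $a$ by $a+1$ if $a\in S,a+1\notin S$ (else $0$), $K_{a,a+1}$ acts by $q^{[a+1\in S]-[a\in S]}$. $I(m|n)=\{-m,\dots,-1\}\cup\{1,\dots,n\}$; $\mathbb Z^{m|n}_+=\{f:f(-m)>\cdots>f(-1),\ f(1)<\cdots<f(n)\}$, $\mathbb Z^{m|n}_{++}=\{f\in\mathbb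 Z^{m|n}_+:f(n)\le n\}$. $\mathcal E^{m|n}=\Lambda^m\mathbb V\otimes\Lambda^n\mathbb W$ with basis $K_f=v_{f(-m)}\wedge\cdots\wedge v_{f(-1)}\otimes w_{f(1)}\wedge\cdots\wedge w_{f(n)}$. $\widehat{\mathcal E}^{m|n}$: formal sums $\sum c_fK_f$ such that for every $d\in\mathbb N$ only finitely many $f$ with $c_f\ne0$ have $f(i)\ge-d$ for all $1\le i\le n$; $\widehat{\mathcal E}^{m|n}_+$: those supported on $\mathbb Z^{m|n}_{++}$. Super Bruhat ordering: with $d_i(j)=-\mathrm{sgn}(i)\delta_{ij}$, $f\downarrow g$ if $g=f-d_i+d_j$ ($i<0<j$, $f(i)=f(j)$), or $g=f\cdot\tau_{ij}$ ($i<j<0$, $f(i)>f(j)$), or $g=f\cdot\tau_{ij}$ ($0<i<j$, $f(i)<f(j)$); $\succ$ is the transitive closure. $f$ is typical if $\{f(i):i<0\}\cap\{f(j):j>0\}=\emptyset$. The bar involution on $\widehat{\mathcal E}^{m|n}$ is the unique continuous anti-linear map fixing $K_f$ for typical $f$, with $\overline{Xu}=\bar X\bar u$ for $X\in\mathcal U$, which is an involution and satisfies $\overline{K_f}\in K_f+$ (possibly infinite) $\mathbb Z[q,q^{-1}]$-combination of $K_g$ with $g\prec f$. $\mathfrak{Tr}_{n+1,n}$ is the (continuous) linear map sending $K_f$ ($f\in\mathbb Z^{m|n+1}_{++}$) to $K_{f^{(n)}}$ if $f(n+1)=n+1$ and to $0$ otherwise, $f^{(n)}$ being the restriction of $f$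 to $I(m|n)$. *)

theory Defs
  imports "HOL-Computational_Algebra.Polynomial" "HOL-Computational_Algebra.Fraction_Field"
begin

type_synonym qq = "rat poly fract"

definition qvar :: qq where "qvar = Fract [:0, 1:] 1"

definition qpow :: "int \<Rightarrow> qq" where "qpow k = qvar powi k"

text \<open>bar map q |-> q^-1 on Q(q): p(q)/r(q) |-> p(q^-1)/r(q^-1)
  = (reflect p * q^deg r) / (reflect r * q^deg p).\<close>
definition qbar :: "qq \<Rightarrow> qq" where
  "qbar x = (let (p, r) = (SOME (p, r). r \<noteq> 0 \<and> x = Fract p r)
             in Fract (reflect_poly p * monom 1 (degree r)) (reflect_poly r * monom 1 (degree p)))"

definition laurent_int :: "qq set" where
  "laurent_int = {c. \<exists>(p :: int poly) (k :: nat). c = Fract (map_poly of_int p) (monom 1 k)}"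

text \<open>A function f : I(m|n) -> Z is represented by an int => int function vanishing outside I(m|n).\<close>

definition negI :: "nat \<Rightarrow> int set" where "negI m = {- int m .. -1}"
definition posI :: "nat \<Rightarrow> int set" where "posI n = {1 .. int n}"
definition Iset :: "nat \<Rightarrow> nat \<Rightarrow> int set" where "Iset m n = negI m \<union> posI n"

definition Zfun :: "nat \<Rightarrow> nat \<Rightarrow> (int \<Rightarrow> int) set" where
  "Zfun m n = {f. \<forall>i. i \<notin> Iset m n \<longrightarrow> f i = 0}"

definition Zp :: "nat \<Rightarrow> nat \<Rightarrow> (int \<Rightarrow> int) set" where
  "Zp m n = {f \<in> Zfun m n.
     (\<forall>i j. i \<in> negI m \<longrightarrow> j \<in> negI m \<longrightarrow> i < j \<longrightarrow> f i > f j) \<and>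
     (\<forall>i j. i \<in> posI n \<longrightarrow> j \<in> posI n \<longrightarrow> i < j \<longrightarrow> f i < f j)}"

text \<open>Z^{m|n}_{++}: additionally f(n) <= n (vacuous when n = 0, since then f 0 = 0).\<close>
definition Zpp :: "nat \<Rightarrow> nat \<Rightarrow> (int \<Rightarrow> int) set" where
  "Zpp m n = {f \<in> Zp m n. f (int n) \<le> int n}"

definition typical :: "nat \<Rightarrow> nat \<Rightarrow> (int \<Rightarrow> int) \<Rightarrow> bool" where
  "typical m n f \<longleftrightarrow> f ` negI m \<inter> f ` posI n = {}"

definition dvec :: "int \<Rightarrow> int \<Rightarrow> int" where
  "dvec i = (\<lambda>j. if j = i then - sgn i else 0)"

definition swapf :: "(int \<Rightarrow> int) \<Rightarrow> int \<Rightarrow> int \<Rightarrow> (int \<Rightarrow> int)" where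
  "swapf f i j = (\<lambda>k. if k = i then f j else if k = j then f i else f k)"

definition bruhat_step :: "nat \<Rightarrow> nat \<Rightarrow> (int \<Rightarrow> int) \<Rightarrow> (int \<Rightarrow> int) \<Rightarrow> bool" where
  "bruhat_step m n f g \<longleftrightarrow>
     (\<exists>i j. i \<in> negI m \<and> j \<in> posI n \<and> f i = f j \<and> g = (\<lambda>k. f k - dvec i k + dvec j k)) \<or>
     (\<exists>i j. i \<in> negI m \<and> j \<in> negI m \<and> i < j \<and> f i > f j \<and> g = swapf f i j) \<or>
     (\<exists>i j. i \<in> posI n \<and> j \<in> posI n \<and> i < j \<and> f i < f j \<and> g = swapf f i j)"

text \<open>bruhat_gt m n f g  means  f \<succ> g  (equivalently g \<prec> f)\<close>
definition bruhat_gt :: "nat \<Rightarrow> nat \<Rightarrow> (int \<Rightarrow> int) \<Rightarrow> (int \<Rightarrow> int) \<Rightarrow> bool" where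
  "bruhat_gt m n = tranclp (bruhat_step m n)"

text \<open>A formal sum \<Sum> c_f K_f is represented by its coefficient function f |-> c_f.\<close>
type_synonym fsum = "(int \<Rightarrow> int) \<Rightarrow> qq"

definition Ehat :: "nat \<Rightarrow> nat \<Rightarrow> fsum set" where
  "Ehat m n = {u. (\<forall>f. f \<notin> Zp m n \<longrightarrow> u f = 0) \<and>
      (\<forall>d::nat. finite {f. u f \<noteq> 0 \<and> (\<forall>i \<in> posI n. f i \<ge> - int d)})}"

definition Ehatp :: "nat \<Rightarrow> nat \<Rightarrow> fsum set" where
  "Ehatp m n = {u \<in> Ehat m n. \<forall>f. f \<notin> Zpp m n \<longrightarrow> u f = 0}"

definition Kb :: "(int \<Rightarrow> int) \<Rightarrow> fsum" where
  "Kb f = (\<lambda>g. if g = f then 1 else 0)"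

definition fs_add :: "fsum \<Rightarrow> fsum \<Rightarrow> fsum" where
  "fs_add u v = (\<lambda>f. u f + v f)"

definition fs_smult :: "qq \<Rightarrow> fsum \<Rightarrow> fsum" where
  "fs_smult c u = (\<lambda>f. c * u f)"

text \<open>Basic neighbourhoods of 0 of the (linear) topology defining the completion:
  closure of the span of the K_f having f(i) < -d for some i > 0.\<close>
definition nbhd :: "nat \<Rightarrow> nat \<Rightarrow> nat \<Rightarrow> fsum set" where
  "nbhd m n d = {u \<in> Ehat m n. \<forall>f. u f \<noteq> 0 \<longrightarrow> (\<exists>i \<in> posI n. f i < - int d)}"

definition continuous_fs :: "nat \<Rightarrow> nat \<Rightarrow> (fsum \<Rightarrow> fsum) \<Rightarrow> bool" where
  "continuous_fs m n \<psi> \<longleftrightarrow>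
     (\<forall>d. \<exists>d'. \<forall>u \<in> Ehat m n. \<forall>v \<in> Ehat m n.
         fs_add u (fs_smult (-1) v) \<in> nbhd m n d' \<longrightarrow>
         fs_add (\<psi> u) (fs_smult (-1) (\<psi> v)) \<in> nbhd m n d)"

definition ind :: "bool \<Rightarrow> int" where "ind b = (if b then 1 else 0)"

definition Sset :: "nat \<Rightarrow> (int \<Rightarrow> int) \<Rightarrow> int set" where "Sset m g = g ` negI m"
definition Tset :: "nat \<Rightarrow> (int \<Rightarrow> int) \<Rightarrow> int set" where "Tset n g = g ` posI n"

definition replV :: "nat \<Rightarrow> (int \<Rightarrow> int) \<Rightarrow> int \<Rightarrow> int \<Rightarrow> (int \<Rightarrow> int)" where
  "replV m g a b = (\<lambda>i. if i \<in> negI m \<and> g i = a then b else g i)"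
definition replW :: "nat \<Rightarrow> (int \<Rightarrow> int) \<Rightarrow> int \<Rightarrow> int \<Rightarrow> (int \<Rightarrow> int)" where
  "replW n g a b = (\<lambda>i. if i \<in> posI n \<and> g i = a then b else g i)"

text \<open>Action on \<Lambda>^m V \<otimes> \<Lambda>^n W via the comultiplication, written coefficientwise
  (the coefficient of K_g in X u), which is the continuous extension to the completion.\<close>
definition Eop :: "nat \<Rightarrow> nat \<Rightarrow> int \<Rightarrow> fsum \<Rightarrow> fsum" where
  "Eop m n a u = (\<lambda>g. if g \<in> Zp m n then
      (if a + 1 \<in> Tset n g \<and> a \<notin> Tset n g then u (replW n g (a + 1) a) else 0)
    + (if a \<in> Sset m g \<and> a + 1 \<notin> Sset m g
       then qpow (ind (a \<in> Tset n g) - ind (a + 1 \<in> Tset n g)) * u (replV m g a (a + 1)) else 0)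
    else 0)"

definition Fop :: "nat \<Rightarrow> nat \<Rightarrow> int \<Rightarrow> fsum \<Rightarrow> fsum" where
  "Fop m n a u = (\<lambda>g. if g \<in> Zp m n then
      (if a + 1 \<in> Sset m g \<and> a \<notin> Sset m g then u (replV m g (a + 1) a) else 0)
    + (if a \<in> Tset n g \<and> a + 1 \<notin> Tset n g
       then qpow (ind (a \<in> Sset m g) - ind (a + 1 \<in> Sset m g)) * u (replW n g a (a + 1)) else 0)
    else 0)"

definition Kexp :: "nat \<Rightarrow> nat \<Rightarrow> int \<Rightarrow> (int \<Rightarrow> int) \<Rightarrow> int" where
  "Kexp m n a g = ind (a \<in> Sset m g) - ind (a + 1 \<in> Sset m g) + ind (a + 1 \<in> Tset n g) - ind (a \<in> Tset n g)"

definition Kop :: "nat \<Rightarrow> nat \<Rightarrow> int \<Rightarrow> fsum \<Rightarrow> fsum" where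
  "Kop m n a u = (\<lambda>g. if g \<in> Zp m n then qpow (Kexp m n a g) * u g else 0)"

definition Kinvop :: "nat \<Rightarrow> nat \<Rightarrow> int \<Rightarrow> fsum \<Rightarrow> fsum" where
  "Kinvop m n a u = (\<lambda>g. if g \<in> Zp m n then qpow (- Kexp m n a g) * u g else 0)"

definition is_bar_involution :: "nat \<Rightarrow> nat \<Rightarrow> (fsum \<Rightarrow> fsum) \<Rightarrow> bool" where
  "is_bar_involution m n \<psi> \<longleftrightarrow>
     (\<forall>u \<in> Ehat m n. \<psi> u \<in> Ehat m n) \<and>
     continuous_fs m n \<psi> \<and>
     (\<forall>u \<in> Ehat m n. \<forall>v \<in> Ehat m n. \<psi> (fs_add u v) = fs_add (\<psi> u) (\<psi> v)) \<and>
     (\<forall>c. \<forall>u \<in> Ehat m n. \<psi> (fs_smult c u) = fs_smult (qbar c) (\<psi> u)) \<and>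
     (\<forall>f \<in> Zp m n. typical m n f \<longrightarrow> \<psi> (Kb f) = Kb f) \<and>
     (\<forall>a. \<forall>u \<in> Ehat m n.
        \<psi> (Eop m n a u) = Eop m n a (\<psi> u) \<and>
        \<psi> (Fop m n a u) = Fop m n a (\<psi> u) \<and>
        \<psi> (Kop m n a u) = Kinvop m n a (\<psi> u) \<and>
        \<psi> (Kinvop m n a u) = Kop m n a (\<psi> u)) \<and>
     (\<forall>u \<in> Ehat m n. \<psi> (\<psi> u) = u) \<and>
     (\<forall>f \<in> Zp m n. \<psi> (Kb f) f = 1 \<and>
        (\<forall>g. \<psi> (Kb f) g \<in> laurent_int) \<and>
        (\<forall>g. g \<noteq> f \<longrightarrow> \<psi> (Kb f) g \<noteq> 0 \<longrightarrow> bruhat_gt m n f g))"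

text \<open>Truncation Tr_{n+1,n}: K_f |-> K_{f^(n)} if f(n+1) = n+1, else 0 (f in Z^{m|n+1}_{++});
  coefficientwise: the coefficient of K_g (g in Z^{m|n}_{++}) is the coefficient of K_{g(n+1 := n+1)}.\<close>
definition truncation :: "nat \<Rightarrow> nat \<Rightarrow> fsum \<Rightarrow> fsum" where
  "truncation m n u = (\<lambda>g. if g \<in> Zpp m n then u (g (int n + 1 := int n + 1)) else 0)"

end

(* Truncation is computed coefficientwise.  By continuity, each coefficient of psi u is a finite
   combination of coefficients of the psi K_f, and psi K_f only involves K_g with g Bruhat-below f,
   hence of no larger weight and with no larger W-values.  So the K_f with f(n+1) < n+1 do not
   contribute, and it suffices to compare, for g and x with W-values below c, the coefficient of
   K_(x,c) in psi_(n+1) K_(g,c) with that of K_x in psi_n K_g, where (g,c) appends the value c at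
   position n+1.  This goes by induction on the weight difference of g and x, then on the
   atypicality of (g,c).  If (g,c) is typical, both basis vectors are bar invariant.  Otherwise let
   b be its least atypical value.  If b < c, lowering b by one is expressed by
   K_(g,c) = F_(b-1) K_(g',c) or E_(b-1) K_(g',c) = K_(g,c) + q K_(g'',c); as F_(b-1) and E_(b-1)
   do not touch the appended value, these relations hold at both levels and reduce to smaller
   instances.  If b = c the same works, except that the terms moving c are killed by the bound on
   W-values, and that when c - 1 is not a W-value of g it is the appended value c that is lowered. *)

theory Submission
  imports Defs "HOL-Library.Product_Lexorder"
begin

lemma finite_negI [simp]: "finite (negI m)"
  by (simp add: negI_def)

lemma finite_posI [simp]: "finite (posI n)"
  by (simp add: posI_def)

lemma finite_Iset [simp]: "finite (Iset m n)"
  by (simp add: Iset_def)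

lemma finite_Sset [simp]: "finite (Sset m g)"
  by (simp add: Sset_def)

lemma finite_Tset [simp]: "finite (Tset n g)"
  by (simp add: Tset_def)

lemma negI_posI_disjoint: "negI m \<inter> posI n = {}"
  by (auto simp: negI_def posI_def)

lemma posI_Suc: "posI (Suc n) = insert (int n + 1) (posI n)"
  by (auto simp: posI_def)

lemma Iset_Suc: "Iset m (Suc n) = insert (int n + 1) (Iset m n)"
  by (auto simp: Iset_def posI_Suc)

lemma top_index_notin [simp]: "int n + 1 \<notin> posI n" "int n + 1 \<notin> negI m" "int n + 1 \<notin> Iset m n"
  by (auto simp: posI_def negI_def Iset_def)

lemma typical_iff_disjoint: "typical m N g \<longleftrightarrow> Sset m g \<inter> Tset N g = {}"
  by (simp add: typical_def Sset_def Tset_def)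

lemma Zp_inj_on_negI: "G \<in> Zp m N \<Longrightarrow> inj_on G (negI m)"
  unfolding inj_on_def Zp_def
  by (metis (no_types, lifting) linorder_neqE_linordered_idom mem_Collect_eq order_less_irrefl)

lemma Zp_inj_on_posI: "G \<in> Zp m N \<Longrightarrow> inj_on G (posI N)"
  unfolding inj_on_def Zp_def
  by (metis (no_types, lifting) linorder_neqE_linordered_idom mem_Collect_eq order_less_irrefl)

lemma Zp_posI_le_last:
  assumes "f \<in> Zp m N" "i \<in> posI N"
  shows "f i \<le> f (int N)"
proof (cases "i = int N")
  case False
  then have "i < int N" "int N \<in> posI N" using assms(2) by (auto simp: posI_def)
  then show ?thesis using assms unfolding Zp_def by force
qed simp

lemma Zpp_posI_le: "f \<in> Zpp m N \<Longrightarrow> i \<in> posI N \<Longrightarrow> f i \<le> int N"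
  using Zp_posI_le_last by (fastforce simp: Zpp_def)

lemma Sset_replV: "a \<in> Sset m G \<Longrightarrow> Sset m (replV m G a a') = insert a' (Sset m G - {a})"
  unfolding Sset_def replV_def by force

lemma Tset_replW: "a \<in> Tset N G \<Longrightarrow> Tset N (replW N G a a') = insert a' (Tset N G - {a})"
  unfolding Tset_def replW_def by force

lemma Tset_replV [simp]: "Tset N (replV m G a a') = Tset N G"
  using negI_posI_disjoint unfolding Tset_def replV_def by (intro image_cong) auto

lemma Sset_replW [simp]: "Sset m (replW N G a a') = Sset m G"
  using negI_posI_disjoint unfolding Sset_def replW_def by (intro image_cong) auto

lemma replV_replV_inverse: "a' \<notin> Sset m G \<Longrightarrow> replV m (replV m G a a') a' a = G"
  unfolding replV_def Sset_def by (auto simp: fun_eq_iff)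

lemma replW_replW_inverse: "a' \<notin> Tset N G \<Longrightarrow> replW N (replW N G a a') a' a = G"
  unfolding replW_def Tset_def by (auto simp: fun_eq_iff)

lemma replV_Zp:
  assumes G: "G \<in> Zp m N" and a': "a' \<notin> Sset m G" and adj: "a' = a + 1 \<or> a' = a - 1"
  shows "replV m G a a' \<in> Zp m N"
proof -
  have "replV m G a a' \<in> Zfun m N"
    using G by (auto simp: Zp_def Zfun_def replV_def Iset_def)
  moreover have "replV m G a a' i > replV m G a a' j" if "i \<in> negI m" "j \<in> negI m" "i < j" for i j
  proof -
    have "G i > G j" using G that by (simp add: Zp_def)
    moreover have "G i \<noteq> a'" "G j \<noteq> a'" using a' that by (auto simp: Sset_def)
    ultimately show ?thesis using adj that by (auto simp: replV_def)
  qed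
  moreover have "\<forall>i j. i \<in> posI N \<longrightarrow> j \<in> posI N \<longrightarrow> i < j \<longrightarrow> replV m G a a' i < replV m G a a' j"
    using G negI_posI_disjoint by (auto simp: Zp_def replV_def)
  ultimately show ?thesis by (simp add: Zp_def)
qed

lemma replW_Zp:
  assumes G: "G \<in> Zp m N" and a': "a' \<notin> Tset N G" and adj: "a' = a + 1 \<or> a' = a - 1"
  shows "replW N G a a' \<in> Zp m N"
proof -
  have "replW N G a a' \<in> Zfun m N"
    using G by (auto simp: Zp_def Zfun_def replW_def Iset_def)
  moreover have "replW N G a a' i < replW N G a a' j" if "i \<in> posI N" "j \<in> posI N" "i < j" for i j
  proof -
    have "G i < G j" using G that by (simp add: Zp_def)
    moreover have "G i \<noteq> a'" "G j \<noteq> a'" using a' that by (auto simp: Tset_def)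
    ultimately show ?thesis using adj that by (auto simp: replW_def)
  qed
  moreover have "\<forall>i j. i \<in> negI m \<longrightarrow> j \<in> negI m \<longrightarrow> i < j \<longrightarrow> replW N G a a' i > replW N G a a' j"
    using G negI_posI_disjoint by (auto simp: Zp_def replW_def)
  ultimately show ?thesis by (simp add: Zp_def)
qed

lemma replV_eq_fun_upd:
  "G \<in> Zp m N \<Longrightarrow> i \<in> negI m \<Longrightarrow> replV m G (G i) a' = G(i := a')"
  using Zp_inj_on_negI unfolding replV_def by (fastforce simp: fun_eq_iff inj_on_def)

lemma replW_eq_fun_upd:
  "G \<in> Zp m N \<Longrightarrow> i \<in> posI N \<Longrightarrow> replW N G (G i) a' = G(i := a')"
  using Zp_inj_on_posI unfolding replW_def by (fastforce simp: fun_eq_iff inj_on_def)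

section \<open>Weight and the Bruhat ordering\<close>

definition weight :: "nat \<Rightarrow> nat \<Rightarrow> (int \<Rightarrow> int) \<Rightarrow> int" where
  "weight m N f = (\<Sum>i\<in>Iset m N. f i)"

lemma sum_fun_upd:
  fixes G :: "'a \<Rightarrow> 'b::ab_group_add"
  assumes "finite I" "i \<in> I"
  shows "(\<Sum>k\<in>I. (G(i := v)) k) = (\<Sum>k\<in>I. G k) + (v - G i)"
proof -
  have "(\<Sum>k\<in>I - {i}. (G(i := v)) k) = (\<Sum>k\<in>I - {i}. G k)"
    by (rule sum.cong) auto
  then show ?thesis using sum.remove[OF assms, of "G(i := v)"] sum.remove[OF assms, of G] by simp
qed

lemma weight_replV:
  assumes G: "G \<in> Zp m N" and a: "a \<in> Sset m G"
  shows "weight m N (replV m G a a') = weight m N G + (a' - a)"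
proof -
  obtain i where i: "i \<in> negI m" "a = G i" using a by (auto simp: Sset_def)
  have "i \<in> Iset m N" using i by (simp add: Iset_def)
  then show ?thesis
    unfolding weight_def i(2) replV_eq_fun_upd[OF G i(1)] by (rule sum_fun_upd[OF finite_Iset])
qed

lemma weight_replW:
  assumes G: "G \<in> Zp m N" and a: "a \<in> Tset N G"
  shows "weight m N (replW N G a a') = weight m N G + (a' - a)"
proof -
  obtain i where i: "i \<in> posI N" "a = G i" using a by (auto simp: Tset_def)
  have "i \<in> Iset m N" using i by (simp add: Iset_def)
  then show ?thesis
    unfolding weight_def i(2) replW_eq_fun_upd[OF G i(1)] by (rule sum_fun_upd[OF finite_Iset])
qed

lemma sum_swapf:
  assumes "finite I" "i \<in> I" "j \<in> I"
  shows "(\<Sum>k\<in>I. swapf g i j k) = (\<Sum>k\<in>I. g k)"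
proof (cases "i = j")
  case True
  then show ?thesis by (auto simp: swapf_def intro!: sum.cong)
next
  case False
  then have "swapf g i j = (g(i := g j))(j := g i)"
    by (auto simp: swapf_def fun_eq_iff)
  then show ?thesis
    using sum_fun_upd[OF assms(1,3), of "g(i := g j)" "g i"] sum_fun_upd[OF assms(1,2), of g "g j"] False
    by simp
qed

lemma bruhat_step_weight_le:
  assumes "bruhat_step m N f g"
  shows "weight m N g \<le> weight m N f"
  using assms unfolding bruhat_step_def
proof (elim disjE exE conjE)
  fix i j assume i: "i \<in> negI m" and j: "j \<in> posI N" and g: "g = (\<lambda>k. f k - dvec i k + dvec j k)"
  have "i \<in> Iset m N" "j \<in> Iset m N" "i < 0" "j > 0"
    using i j by (auto simp: Iset_def negI_def posI_def)
  then have "weight m N g = weight m N f - 2"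
    unfolding g weight_def by (simp add: sum.distrib sum_subtractf dvec_def)
  then show ?thesis by simp
qed (auto simp: weight_def Iset_def sum_swapf)

lemma bruhat_step_posI_le:
  assumes "bruhat_step m N f g" "\<forall>k\<in>posI N. f k \<le> v"
  shows "\<forall>k\<in>posI N. g k \<le> v"
  using assms(1) unfolding bruhat_step_def
proof (elim disjE exE conjE)
  fix i j assume i: "i \<in> negI m" and j: "j \<in> posI N" and g: "g = (\<lambda>k. f k - dvec i k + dvec j k)"
  have "k \<noteq> i" "j > 0" if "k \<in> posI N" for k
    using i j that by (auto simp: posI_def negI_def)
  then show ?thesis using assms(2) by (auto simp: g dvec_def)
qed (use assms(2) negI_posI_disjoint in \<open>auto simp: swapf_def\<close>)

lemma bruhat_gt_weight_le: "bruhat_gt m N f g \<Longrightarrow> weight m N g \<le> weight m N f"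
  unfolding bruhat_gt_def
  by (induction rule: tranclp_induct) (auto dest: bruhat_step_weight_le)

lemma bruhat_gt_posI_le:
  "bruhat_gt m N f g \<Longrightarrow> \<forall>k\<in>posI N. f k \<le> v \<Longrightarrow> \<forall>k\<in>posI N. g k \<le> v"
  unfolding bruhat_gt_def
  by (induction rule: tranclp_induct) (auto dest: bruhat_step_posI_le)

section \<open>Appending a value at position n + 1\<close>

definition extend :: "nat \<Rightarrow> (int \<Rightarrow> int) \<Rightarrow> int \<Rightarrow> (int \<Rightarrow> int)" where
  "extend n g c = g(int n + 1 := c)"

lemma extend_Zp:
  assumes g: "g \<in> Zp m n" and c: "\<forall>t\<in>Tset n g. t < c"
  shows "extend n g c \<in> Zp m (Suc n)"
proof -
  have "extend n g c i < extend n g c j"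
    if "i \<in> posI (Suc n)" "j \<in> posI (Suc n)" "i < j" for i j
  proof (cases "j = int n + 1")
    case True
    then have "i \<in> posI n" using that by (auto simp: posI_def)
    then show ?thesis using True c that by (auto simp: extend_def Tset_def)
  next
    case False
    then have "i \<in> posI n" "j \<in> posI n" using that by (auto simp: posI_def)
    then show ?thesis using g that by (auto simp: extend_def Zp_def posI_def)
  qed
  then show ?thesis
    using g by (auto simp: Zp_def Zfun_def extend_def Iset_Suc)
qed

lemma Sset_extend [simp]: "Sset m (extend n g c) = Sset m g"
  unfolding Sset_def extend_def by (intro image_cong) auto

lemma Tset_extend [simp]: "Tset (Suc n) (extend n g c) = insert c (Tset n g)"
proof -
  have "extend n g c ` posI n = g ` posI n"
    unfolding extend_def by (intro image_cong) auto
  then show ?thesis unfolding Tset_def posI_Suc by (simp add: extend_def)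
qed

lemma replV_extend: "replV m (extend n g c) a a' = extend n (replV m g a a') c"
  unfolding replV_def extend_def by (auto simp: fun_eq_iff)

lemma replW_extend: "a \<noteq> c \<Longrightarrow> replW (Suc n) (extend n g c) a a' = extend n (replW n g a a') c"
  unfolding replW_def extend_def by (auto simp: fun_eq_iff posI_Suc)

lemma replW_extend_top: "c \<notin> Tset n g \<Longrightarrow> replW (Suc n) (extend n g c) c a' = extend n g a'"
  unfolding replW_def extend_def Tset_def by (auto simp: fun_eq_iff posI_Suc)

lemma weight_extend: "g \<in> Zfun m n \<Longrightarrow> weight m (Suc n) (extend n g c) = weight m n g + c"
proof -
  have "(\<Sum>i\<in>Iset m n. extend n g c i) = weight m n g"
    unfolding weight_def extend_def by (intro sum.cong) auto
  then show ?thesis unfolding weight_def Iset_Suc by (simp add: extend_def)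
qed

lemma extend_eq_iff:
  assumes "g \<in> Zfun m n" "x \<in> Zfun m n"
  shows "extend n x c = extend n g c \<longleftrightarrow> x = g"
proof
  assume e: "extend n x c = extend n g c"
  show "x = g"
  proof
    fix i
    show "x i = g i"
    proof (cases "i = int n + 1")
      case True
      then show ?thesis using assms by (auto simp: Zfun_def)
    next
      case False
      then show ?thesis using fun_cong[OF e, of i] by (simp add: extend_def)
    qed
  qed
qed simp

lemma inj_on_extend: "inj_on (\<lambda>g. extend n g c) (Zfun m n)"
  using extend_eq_iff by (auto simp: inj_on_def)

lemma Zp_Suc_eq_extend:
  assumes G: "G \<in> Zp m (Suc n)"
  obtains g where "g \<in> Zp m n" "\<forall>t\<in>Tset n g. t < G (int n + 1)" "G = extend n g (G (int n + 1))"
proof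
  have top: "int n + 1 \<in> posI (Suc n)" by (simp add: posI_def)
  show "G(int n + 1 := 0) \<in> Zp m n"
    using G unfolding Zp_def Zfun_def by (auto simp: Iset_Suc posI_Suc)
  show "\<forall>t\<in>Tset n (G(int n + 1 := 0)). t < G (int n + 1)"
    using G top unfolding Zp_def Tset_def by (auto simp: posI_Suc posI_def)
qed (simp add: extend_def)

section \<open>Atypicality\<close>

definition atyp_measure :: "int set \<Rightarrow> int set \<Rightarrow> nat \<times> nat" where
  "atyp_measure S T = (card (S \<inter> T), nat (Min (S \<inter> T) - Min (S \<union> T)))"

lemma atyp_measure_commute: "atyp_measure S T = atyp_measure T S"
  by (simp add: atyp_measure_def Int_commute Un_commute)

lemma atyp_measure_shift_min:
  assumes fin: "finite S" "finite T" and ne: "S \<inter> T \<noteq> {}" and b: "b = Min (S \<inter> T)"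
    and b1: "b - 1 \<notin> S"
  shows "atyp_measure (insert (b - 1) (S - {b})) T < atyp_measure S T"
proof -
  have bST: "b \<in> S \<inter> T" using Min_in[of "S \<inter> T"] fin ne b by simp
  have bmin: "b \<le> y" if "y \<in> S \<inter> T" for y using that fin b by simp
  show ?thesis
  proof (cases "b - 1 \<in> T")
    case True
    have X: "insert (b - 1) (S - {b}) \<inter> T = insert (b - 1) (S \<inter> T - {b})"
      using True by auto
    have "card (S \<inter> T) > 0" using fin bST card_gt_0_iff by blast
    then have "card (insert (b - 1) (S \<inter> T - {b})) = card (S \<inter> T)"
      using fin bST b1 by (simp add: card_insert_if)
    moreover have "Min (insert (b - 1) (S \<inter> T - {b})) = b - 1"
      using bmin fin by (intro Min_eqI) force+
    moreover have "insert (b - 1) (S - {b}) \<union> T = S \<union> T" using True bST by auto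
    moreover have "Min (S \<union> T) \<le> b - 1" using True fin by (intro Min_le) auto
    ultimately show ?thesis using X b by (simp add: atyp_measure_def)
  next
    case False
    have "insert (b - 1) (S - {b}) \<inter> T = S \<inter> T - {b}" using False by auto
    moreover have "card (S \<inter> T - {b}) < card (S \<inter> T)"
      using fin bST by (intro card_Diff1_less) auto
    ultimately show ?thesis by (simp add: atyp_measure_def)
  qed
qed

lemma atyp_measure_shift_min':
  assumes "finite S" "finite T" "S \<inter> T \<noteq> {}" "b = Min (S \<inter> T)" "b - 1 \<notin> T"
  shows "atyp_measure S (insert (b - 1) (T - {b})) < atyp_measure S T"
  using atyp_measure_shift_min[of T S b] assms by (simp add: atyp_measure_commute Int_commute)

lemma atyp_measure_replV_min:
  assumes ne: "Sset m g \<inter> insert c (Tset n g) \<noteq> {}" and b: "b = Min (Sset m g \<inter> insert c (Tset n g))"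
    and b1: "b - 1 \<notin> Sset m g"
  shows "atyp_measure (Sset m (replV m g b (b - 1))) (insert c (Tset n (replV m g b (b - 1))))
    < atyp_measure (Sset m g) (insert c (Tset n g))"
proof -
  have "b \<in> Sset m g" using Min_in[OF _ ne] b by simp
  then show ?thesis
    using atyp_measure_shift_min[OF _ _ ne b b1] by (simp add: Sset_replV)
qed

lemma atyp_measure_replW_min:
  assumes ne: "Sset m g \<inter> insert c (Tset n g) \<noteq> {}" and b: "b = Min (Sset m g \<inter> insert c (Tset n g))"
    and "b \<noteq> c" "b - 1 \<notin> insert c (Tset n g)"
  shows "atyp_measure (Sset m (replW n g b (b - 1))) (insert c (Tset n (replW n g b (b - 1))))
    < atyp_measure (Sset m g) (insert c (Tset n g))"
proof -
  have "b \<in> Tset n g" using Min_in[OF _ ne] b assms(3) by simp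
  then have "insert c (Tset n (replW n g b (b - 1))) = insert (b - 1) (insert c (Tset n g) - {b})"
    using assms(3) by (auto simp: Tset_replW)
  then show ?thesis
    using atyp_measure_shift_min'[OF _ _ ne b assms(4)] by simp
qed

section \<open>The action of E_a and F_a\<close>

lemma Kb_apply: "Kb f g = (if g = f then 1 else 0)"
  by (simp add: Kb_def)

lemma replV_preimage:
  assumes G: "G \<in> Zp m N" and adj: "a' = a + 1 \<or> a' = a - 1"
  shows "(Z \<in> Zp m N \<and> a' \<in> Sset m Z \<and> a \<notin> Sset m Z \<and> replV m Z a' a = G) \<longleftrightarrow>
         (a \<in> Sset m G \<and> a' \<notin> Sset m G \<and> Z = replV m G a a')"
proof
  assume Z: "Z \<in> Zp m N \<and> a' \<in> Sset m Z \<and> a \<notin> Sset m Z \<and> replV m Z a' a = G"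
  then have "Sset m G = insert a (Sset m Z - {a'})" using Sset_replV by blast
  then show "a \<in> Sset m G \<and> a' \<notin> Sset m G \<and> Z = replV m G a a'"
    using Z replV_replV_inverse[of a m Z a'] by auto
next
  assume G': "a \<in> Sset m G \<and> a' \<notin> Sset m G \<and> Z = replV m G a a'"
  then have "Sset m Z = insert a' (Sset m G - {a})" using Sset_replV by blast
  then show "Z \<in> Zp m N \<and> a' \<in> Sset m Z \<and> a \<notin> Sset m Z \<and> replV m Z a' a = G"
    using G' replV_Zp[OF G _ adj] replV_replV_inverse[of a' m G a] by auto
qed

lemma replW_preimage:
  assumes G: "G \<in> Zp m N" and adj: "a' = a + 1 \<or> a' = a - 1"
  shows "(Z \<in> Zp m N \<and> a' \<in> Tset N Z \<and> a \<notin> Tset N Z \<and> replW N Z a' a = G) \<longleftrightarrow>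
         (a \<in> Tset N G \<and> a' \<notin> Tset N G \<and> Z = replW N G a a')"
proof
  assume Z: "Z \<in> Zp m N \<and> a' \<in> Tset N Z \<and> a \<notin> Tset N Z \<and> replW N Z a' a = G"
  then have "Tset N G = insert a (Tset N Z - {a'})" using Tset_replW by blast
  then show "a \<in> Tset N G \<and> a' \<notin> Tset N G \<and> Z = replW N G a a'"
    using Z replW_replW_inverse[of a N Z a'] by auto
next
  assume G': "a \<in> Tset N G \<and> a' \<notin> Tset N G \<and> Z = replW N G a a'"
  then have "Tset N Z = insert a' (Tset N G - {a})" using Tset_replW by blast
  then show "Z \<in> Zp m N \<and> a' \<in> Tset N Z \<and> a \<notin> Tset N Z \<and> replW N Z a' a = G"
    using G' replW_Zp[OF G _ adj] replW_replW_inverse[of a' N G a] by auto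
qed

lemma Eop_Kb:
  assumes G: "G \<in> Zp m N" and "a + 1 \<in> Tset N G" "a \<notin> Tset N G"
  defines "G1 \<equiv> replW N G (a + 1) a"
  shows "Eop m N a (Kb G1) =
    fs_add (Kb G) (fs_smult (if a + 1 \<in> Sset m G \<and> a \<notin> Sset m G then qvar else 0)
      (Kb (replV m G1 (a + 1) a)))"
proof
  fix Z
  have G1: "G1 \<in> Zp m N" unfolding G1_def using replW_Zp[OF G] assms(3) by simp
  have T1: "Tset N G1 = insert a (Tset N G - {a + 1})"
    unfolding G1_def using Tset_replW[OF assms(2)] .
  have S1: "Sset m G1 = Sset m G" by (simp add: G1_def)
  have W: "(Z \<in> Zp m N \<and> a + 1 \<in> Tset N Z \<and> a \<notin> Tset N Z \<and> replW N Z (a + 1) a = G1) \<longleftrightarrow> Z = G"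
    using replW_preimage[OF G1, of "a + 1" a Z] T1 replW_replW_inverse[OF assms(3)]
    by (auto simp: G1_def)
  have V: "(Z \<in> Zp m N \<and> a \<in> Sset m Z \<and> a + 1 \<notin> Sset m Z \<and> replV m Z a (a + 1) = G1) \<longleftrightarrow>
      (a + 1 \<in> Sset m G \<and> a \<notin> Sset m G \<and> Z = replV m G1 (a + 1) a)"
    using replV_preimage[OF G1, of a "a + 1" Z] S1 by simp
  have "ind (a \<in> Tset N Z) - ind (a + 1 \<in> Tset N Z) = 1" if "Z = replV m G1 (a + 1) a"
    using that T1 by (simp add: ind_def)
  then have "(if a \<in> Sset m Z \<and> a + 1 \<notin> Sset m Z then qpow (ind (a \<in> Tset N Z) - ind (a + 1 \<in> Tset N Z))
        * Kb G1 (replV m Z a (a + 1)) else 0) =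
      (if a + 1 \<in> Sset m G \<and> a \<notin> Sset m G then qvar else 0) * Kb (replV m G1 (a + 1) a) Z"
    if "Z \<in> Zp m N"
    using V that by (auto simp: Kb_apply qpow_def)
  moreover have "(if a + 1 \<in> Tset N Z \<and> a \<notin> Tset N Z then Kb G1 (replW N Z (a + 1) a) else 0) = Kb G Z"
    if "Z \<in> Zp m N"
    using W that by (auto simp: Kb_apply)
  moreover have "Kb G Z = 0 \<and> (if a + 1 \<in> Sset m G \<and> a \<notin> Sset m G then qvar else 0) *
      Kb (replV m G1 (a + 1) a) Z = 0" if "Z \<notin> Zp m N"
    using V W that by (auto simp: Kb_apply)
  ultimately show "Eop m N a (Kb G1) Z = fs_add (Kb G) (fs_smult (if a + 1 \<in> Sset m G \<and> a \<notin> Sset m G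
      then qvar else 0) (Kb (replV m G1 (a + 1) a))) Z"
    unfolding Eop_def fs_add_def fs_smult_def by (cases "Z \<in> Zp m N") simp_all
qed

lemma Fop_Kb:
  assumes G: "G \<in> Zp m N" and "a + 1 \<in> Sset m G" "a \<notin> Sset m G" "a \<in> Tset N G"
  shows "Fop m N a (Kb (replV m G (a + 1) a)) = Kb G"
proof
  fix Z
  define G1 where "G1 = replV m G (a + 1) a"
  have G1: "G1 \<in> Zp m N" unfolding G1_def using replV_Zp[OF G] assms(3) by simp
  have S1: "Sset m G1 = insert a (Sset m G - {a + 1})"
    unfolding G1_def using Sset_replV[OF assms(2)] .
  have V: "(Z \<in> Zp m N \<and> a + 1 \<in> Sset m Z \<and> a \<notin> Sset m Z \<and> replV m Z (a + 1) a = G1) \<longleftrightarrow> Z = G"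
    using replV_preimage[OF G1, of "a + 1" a Z] S1 replV_replV_inverse[OF assms(3)]
    by (auto simp: G1_def)
  have W: "\<not> (Z \<in> Zp m N \<and> a \<in> Tset N Z \<and> a + 1 \<notin> Tset N Z \<and> replW N Z a (a + 1) = G1)"
    using replW_preimage[OF G1, of a "a + 1" Z] assms(4) by (simp add: G1_def)
  show "Fop m N a (Kb G1) Z = Kb G Z"
    using V W G by (auto simp: Fop_def Kb_apply)
qed

lemma Eop_cong:
  assumes "a + 1 \<in> Tset N x \<Longrightarrow> a \<notin> Tset N x \<Longrightarrow> u (replW N x (a + 1) a) = v (replW N x (a + 1) a)"
    and "a \<in> Sset m x \<Longrightarrow> a + 1 \<notin> Sset m x \<Longrightarrow> u (replV m x a (a + 1)) = v (replV m x a (a + 1))"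
  shows "Eop m N a u x = Eop m N a v x"
  using assms by (simp add: Eop_def)

lemma Fop_cong:
  assumes "a + 1 \<in> Sset m x \<Longrightarrow> a \<notin> Sset m x \<Longrightarrow> u (replV m x (a + 1) a) = v (replV m x (a + 1) a)"
    and "a \<in> Tset N x \<Longrightarrow> a + 1 \<notin> Tset N x \<Longrightarrow> u (replW N x a (a + 1)) = v (replW N x a (a + 1))"
  shows "Fop m N a u x = Fop m N a v x"
  using assms by (simp add: Fop_def)

lemma Eop_extend:
  assumes "x \<in> Zp m n" "\<forall>t\<in>Tset n x. t < c" "a \<noteq> c" "a + 1 \<noteq> c"
  shows "Eop m (Suc n) a y (extend n x c) = Eop m n a (\<lambda>z. y (extend n z c)) x"
  using extend_Zp[OF assms(1,2)] assms by (simp add: Eop_def replW_extend replV_extend)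

lemma Fop_extend:
  assumes "x \<in> Zp m n" "\<forall>t\<in>Tset n x. t < c" "a \<noteq> c" "a + 1 \<noteq> c"
  shows "Fop m (Suc n) a y (extend n x c) = Fop m n a (\<lambda>z. y (extend n z c)) x"
  using extend_Zp[OF assms(1,2)] assms by (simp add: Fop_def replW_extend replV_extend)

lemma Eop_extend_top:
  assumes "x \<in> Zp m n" "\<forall>t\<in>Tset n x. t < c" "\<forall>z. y (extend n z c) = 0"
  shows "Eop m (Suc n) (c - 1) y (extend n x c) =
    (if c - 1 \<in> Tset n x then 0 else y (extend n x (c - 1)))"
proof -
  have "c \<notin> Tset n x" using assms(2) by auto
  then show ?thesis
    using extend_Zp[OF assms(1,2)] assms(3) by (simp add: Eop_def replW_extend_top replV_extend)
qed

lemma Fop_extend_top: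
  assumes "x \<in> Zp m n" "\<forall>t\<in>Tset n x. t < c"
  shows "Fop m (Suc n) (c - 1) y (extend n x c) =
    (if c \<in> Sset m x \<and> c - 1 \<notin> Sset m x then y (extend n (replV m x c (c - 1)) c) else 0)"
  using extend_Zp[OF assms] by (simp add: Fop_def replV_extend)

lemma Fop_top_vanishing:
  assumes "x \<in> Zp m n" "\<forall>z. c \<in> Tset n z \<longrightarrow> w z = 0"
  shows "Fop m n (c - 1) w x =
    (if c \<in> Sset m x \<and> c - 1 \<notin> Sset m x then w (replV m x c (c - 1)) else 0)"
proof -
  have "w (replW n x (c - 1) c) = 0" if "c - 1 \<in> Tset n x"
    using assms(2) Tset_replW[OF that, of c] by auto
  then show ?thesis using assms(1) by (auto simp: Fop_def)
qed

section \<open>Bar involutions\<close>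

definition support_above :: "nat \<Rightarrow> fsum \<Rightarrow> nat \<Rightarrow> (int \<Rightarrow> int) set" where
  "support_above N u D = {f. u f \<noteq> 0 \<and> (\<forall>i\<in>posI N. - int D \<le> f i)}"

lemma finite_support_above: "u \<in> Ehat m N \<Longrightarrow> finite (support_above N u D)"
  by (simp add: Ehat_def support_above_def)

lemma support_above_subset_Zp: "u \<in> Ehat m N \<Longrightarrow> support_above N u D \<subseteq> Zp m N"
  by (auto simp: Ehat_def support_above_def)

lemma restrict_in_Ehat:
  assumes "finite A" "A \<subseteq> Zp m N"
  shows "(\<lambda>f. if f \<in> A then c f else 0) \<in> Ehat m N"
  using assms unfolding Ehat_def by (auto intro: finite_subset[OF _ assms(1)])

lemma fs_smult_in_Ehat: "u \<in> Ehat m N \<Longrightarrow> fs_smult c u \<in> Ehat m N"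
  unfolding Ehat_def fs_smult_def by (auto elim!: allE finite_subset[rotated])

lemma Kb_in_Ehat: "f \<in> Zp m N \<Longrightarrow> Kb f \<in> Ehat m N"
  using restrict_in_Ehat[of "{f}" m N "\<lambda>_. 1"] by (simp add: Kb_def)

lemma minus_restrict_in_nbhd:
  assumes u: "u \<in> Ehat m N"
  shows "fs_add u (fs_smult (-1) (\<lambda>f. if f \<in> support_above N u D then u f else 0)) \<in> nbhd m N D"
    (is "?v \<in> _")
proof -
  have v: "?v f \<noteq> 0 \<Longrightarrow> u f \<noteq> 0 \<and> f \<notin> support_above N u D" for f
    by (auto simp: fs_add_def fs_smult_def support_above_def split: if_splits)
  have "finite {f. ?v f \<noteq> 0 \<and> (\<forall>i\<in>posI N. f i \<ge> - int d)}" for d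
  proof (rule finite_subset)
    show "finite {f. u f \<noteq> 0 \<and> (\<forall>i\<in>posI N. f i \<ge> - int d)}" using u by (simp add: Ehat_def)
  qed (use v in auto)
  moreover have "\<exists>i\<in>posI N. f i < - int D" if "?v f \<noteq> 0" for f
    using v[OF that] by (force simp: support_above_def)
  ultimately show ?thesis
    using u v by (auto simp: nbhd_def Ehat_def)
qed

lemma nbhd_mono:
  assumes "d \<le> d'"
  shows "nbhd m N d' \<subseteq> nbhd m N d"
proof -
  have "- int d' \<le> - int d" using assms by simp
  then show ?thesis unfolding nbhd_def by (fastforce intro: order_less_le_trans)
qed

lemma nbhd_vanishes: "v \<in> nbhd m N d \<Longrightarrow> \<forall>i\<in>posI N. - int d \<le> y i \<Longrightarrow> v y = 0"
  by (force simp: nbhd_def)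

locale bar_involution =
  fixes m N and psi :: "fsum \<Rightarrow> fsum"
  assumes bar: "is_bar_involution m N psi"
begin

lemma bar_Ehat: "u \<in> Ehat m N \<Longrightarrow> psi u \<in> Ehat m N"
  using bar by (simp add: is_bar_involution_def)

lemma bar_add: "u \<in> Ehat m N \<Longrightarrow> v \<in> Ehat m N \<Longrightarrow> psi (fs_add u v) = fs_add (psi u) (psi v)"
  using bar by (simp add: is_bar_involution_def)

lemma bar_smult: "u \<in> Ehat m N \<Longrightarrow> psi (fs_smult c u) = fs_smult (qbar c) (psi u)"
  using bar by (simp add: is_bar_involution_def)

lemma bar_Kb_typical: "f \<in> Zp m N \<Longrightarrow> typical m N f \<Longrightarrow> psi (Kb f) = Kb f"
  using bar by (simp add: is_bar_involution_def)

lemma bar_Eop: "u \<in> Ehat m N \<Longrightarrow> psi (Eop m N a u) = Eop m N a (psi u)"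
  using bar by (simp add: is_bar_involution_def)

lemma bar_Fop: "u \<in> Ehat m N \<Longrightarrow> psi (Fop m N a u) = Fop m N a (psi u)"
  using bar by (simp add: is_bar_involution_def)

lemma bar_Kb_support: "f \<in> Zp m N \<Longrightarrow> psi (Kb f) g \<noteq> 0 \<Longrightarrow> g = f \<or> bruhat_gt m N f g"
  using bar unfolding is_bar_involution_def by blast

lemma bar_continuous: "continuous_fs m N psi"
  using bar by (simp add: is_bar_involution_def)

lemma bar_Kb_weight_gt: "f \<in> Zp m N \<Longrightarrow> weight m N g > weight m N f \<Longrightarrow> psi (Kb f) g = 0"
  using bar_Kb_support bruhat_gt_weight_le by fastforce

lemma bar_Kb_posI_gt:
  assumes f: "f \<in> Zp m N" and "\<forall>k\<in>posI N. f k \<le> v" "k \<in> posI N" "g k > v"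
  shows "psi (Kb f) g = 0"
proof (rule ccontr)
  assume "psi (Kb f) g \<noteq> 0"
  then have "g = f \<or> bruhat_gt m N f g" using bar_Kb_support[OF f] by blast
  then have "\<forall>k\<in>posI N. g k \<le> v" using bruhat_gt_posI_le assms(2) by blast
  then show False using assms(3,4) by force
qed

lemma bar_Kb_last_less:
  assumes f: "f \<in> Zp m N" and "f (int N) < int N" "y (int N) \<ge> int N" "N > 0"
  shows "psi (Kb f) y = 0"
proof (rule bar_Kb_posI_gt[OF f, where k = "int N" and v = "int N - 1"])
  show "\<forall>k\<in>posI N. f k \<le> int N - 1"
    using Zp_posI_le_last[OF f] assms(2) by fastforce
qed (use assms(3,4) in \<open>auto simp: posI_def\<close>)

lemma bar_Kb_E_recursion:
  assumes G: "G \<in> Zp m N" and "a + 1 \<in> Tset N G" "a \<notin> Tset N G"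
  defines "G1 \<equiv> replW N G (a + 1) a"
  shows "psi (Kb G) Z = Eop m N a (psi (Kb G1)) Z -
    (if a + 1 \<in> Sset m G \<and> a \<notin> Sset m G then qbar qvar * psi (Kb (replV m G1 (a + 1) a)) Z else 0)"
proof -
  have G1: "G1 \<in> Zp m N" unfolding G1_def using replW_Zp[OF G] assms(3) by simp
  have E: "Eop m N a (psi (Kb G1)) = psi (Eop m N a (Kb G1))"
    using bar_Eop[OF Kb_in_Ehat[OF G1]] by simp
  show ?thesis
  proof (cases "a + 1 \<in> Sset m G \<and> a \<notin> Sset m G")
    case True
    define G2 where "G2 = replV m G1 (a + 1) a"
    have G2: "G2 \<in> Zp m N" using True replV_Zp[OF G1] by (simp add: G1_def G2_def)
    have "Eop m N a (Kb G1) = fs_add (Kb G) (fs_smult qvar (Kb G2))"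
      using True Eop_Kb[OF assms(1-3)] by (simp add: G1_def G2_def)
    then have "psi (Eop m N a (Kb G1)) = fs_add (psi (Kb G)) (fs_smult (qbar qvar) (psi (Kb G2)))"
      by (simp add: bar_add bar_smult Kb_in_Ehat G G2 fs_smult_in_Ehat)
    then show ?thesis using True E by (simp add: fs_add_def fs_smult_def G2_def)
  next
    case False
    then have "Eop m N a (Kb G1) = Kb G"
      using Eop_Kb[OF assms(1-3)] unfolding G1_def[symmetric] if_not_P[OF False]
      by (simp add: fs_add_def fs_smult_def)
    then show ?thesis unfolding if_not_P[OF False] using E by simp
  qed
qed

lemma bar_Kb_F_recursion:
  assumes G: "G \<in> Zp m N" and "a + 1 \<in> Sset m G" "a \<notin> Sset m G" "a \<in> Tset N G"
  shows "psi (Kb G) = Fop m N a (psi (Kb (replV m G (a + 1) a)))"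
proof -
  have "replV m G (a + 1) a \<in> Zp m N" using replV_Zp[OF G] assms(3) by simp
  then show ?thesis using bar_Fop[OF Kb_in_Ehat] Fop_Kb[OF assms] by metis
qed

lemma bar_zero: "psi (\<lambda>_. 0) = (\<lambda>_. 0)"
proof -
  have z: "(\<lambda>_. 0) \<in> Ehat m N" using restrict_in_Ehat[of "{}"] by simp
  have "fs_add (\<lambda>_. 0) (\<lambda>_. 0) = (\<lambda>_. 0 :: qq)" by (simp add: fs_add_def)
  then have "psi (\<lambda>_. 0) = fs_add (psi (\<lambda>_. 0)) (psi (\<lambda>_. 0))" using bar_add[OF z z] by simp
  then have "\<forall>f. psi (\<lambda>_. 0) f = psi (\<lambda>_. 0) f + psi (\<lambda>_. 0) f" by (metis fs_add_def)
  then show ?thesis by (simp add: fun_eq_iff)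
qed

lemma bar_finite_sum:
  assumes "finite A" "A \<subseteq> Zp m N"
  shows "psi (\<lambda>f. if f \<in> A then c f else 0) = (\<lambda>y. \<Sum>f\<in>A. qbar (c f) * psi (Kb f) y)"
  using assms
proof (induction A rule: finite_induct)
  case empty
  then show ?case using bar_zero by simp
next
  case (insert a A)
  have "(\<lambda>f. if f \<in> insert a A then c f else 0) =
      fs_add (\<lambda>f. if f \<in> A then c f else 0) (fs_smult (c a) (Kb a))"
    using insert(2) by (auto simp: fs_add_def fs_smult_def Kb_apply)
  moreover have "(\<lambda>f. if f \<in> A then c f else 0) \<in> Ehat m N"
    using insert by (intro restrict_in_Ehat) auto
  moreover have "psi (fs_smult (c a) (Kb a)) = fs_smult (qbar (c a)) (psi (Kb a))"
    using insert(4) by (simp add: bar_smult Kb_in_Ehat)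
  ultimately have "psi (\<lambda>f. if f \<in> insert a A then c f else 0) =
      fs_add (psi (\<lambda>f. if f \<in> A then c f else 0)) (fs_smult (qbar (c a)) (psi (Kb a)))"
    using insert(4) by (simp add: bar_add fs_smult_in_Ehat Kb_in_Ehat)
  then show ?case using insert by (simp add: fs_add_def fs_smult_def add.commute)
qed

lemma bar_coeff_expansion:
  assumes u: "u \<in> Ehat m N"
  obtains D0 where "\<And>D. D \<ge> D0 \<Longrightarrow> psi u y = (\<Sum>f\<in>support_above N u D. qbar (u f) * psi (Kb f) y)"
proof -
  define d where "d = nat (\<Sum>i\<in>posI N. \<bar>y i\<bar>)"
  have y: "\<forall>i\<in>posI N. - int d \<le> y i"
  proof
    fix i assume "i \<in> posI N"
    then have "\<bar>y i\<bar> \<le> (\<Sum>i\<in>posI N. \<bar>y i\<bar>)" by (intro member_le_sum) auto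
    then show "- int d \<le> y i" unfolding d_def by linarith
  qed
  obtain d' where d': "\<And>u v. u \<in> Ehat m N \<Longrightarrow> v \<in> Ehat m N \<Longrightarrow> fs_add u (fs_smult (-1) v) \<in> nbhd m N d'
      \<Longrightarrow> fs_add (psi u) (fs_smult (-1) (psi v)) \<in> nbhd m N d"
    using bar_continuous unfolding continuous_fs_def by blast
  show ?thesis
  proof (rule that)
    fix D assume "D \<ge> d'"
    define uD where "uD = (\<lambda>f. if f \<in> support_above N u D then u f else 0)"
    have uD: "uD \<in> Ehat m N"
      unfolding uD_def using u by (intro restrict_in_Ehat finite_support_above support_above_subset_Zp)
    have "fs_add u (fs_smult (-1) uD) \<in> nbhd m N d'"
      using minus_restrict_in_nbhd[OF u] nbhd_mono[OF \<open>D \<ge> d'\<close>] unfolding uD_def by blast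
    then have "fs_add (psi u) (fs_smult (-1) (psi uD)) y = 0"
      using d'[OF u uD] nbhd_vanishes y by blast
    then have "psi u y = psi uD y" by (simp add: fs_add_def fs_smult_def)
    also have "\<dots> = (\<Sum>f\<in>support_above N u D. qbar (u f) * psi (Kb f) y)"
      unfolding uD_def using u by (simp add: bar_finite_sum finite_support_above support_above_subset_Zp)
    finally show "psi u y = (\<Sum>f\<in>support_above N u D. qbar (u f) * psi (Kb f) y)" .
  qed
qed

end

section \<open>Bar involutions at levels n and n + 1 on extended basis vectors\<close>

text \<open>Tuples are compared lexicographically (\<^theory>\<open>HOL-Library.Product_Lexorder\<close>).\<close>

definition descent_rank :: "nat \<Rightarrow> nat \<Rightarrow> (int \<Rightarrow> int) \<Rightarrow> (int \<Rightarrow> int) \<Rightarrow> int \<Rightarrow> int \<times> nat \<times> nat" where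
  "descent_rank m n g x c =
    (weight m n g - weight m n x, atyp_measure (Sset m g) (insert c (Tset n g)))"

locale bar_involution_pair = hi: bar_involution m "Suc n" psi_hi + lo: bar_involution m n psi_lo
  for m n psi_hi psi_lo
begin

lemma coeff_extend_weight_gt:
  assumes "g \<in> Zp m n" "x \<in> Zp m n" "\<forall>t\<in>Tset n g. t < c" "weight m n x > weight m n g"
  shows "psi_hi (Kb (extend n g c)) (extend n x c) = psi_lo (Kb g) x"
proof -
  have "weight m (Suc n) (extend n x c) > weight m (Suc n) (extend n g c)"
    using assms by (simp add: weight_extend Zp_def)
  then show ?thesis
    using hi.bar_Kb_weight_gt[OF extend_Zp] lo.bar_Kb_weight_gt assms by simp
qed

lemma coeff_extend_typical:
  assumes g: "g \<in> Zp m n" and x: "x \<in> Zp m n" and gc: "\<forall>t\<in>Tset n g. t < c"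
    and disj: "Sset m g \<inter> insert c (Tset n g) = {}"
  shows "psi_hi (Kb (extend n g c)) (extend n x c) = psi_lo (Kb g) x"
proof -
  have "typical m (Suc n) (extend n g c)" "typical m n g"
    using disj by (auto simp: typical_iff_disjoint)
  moreover have "g \<in> Zfun m n" "x \<in> Zfun m n" using g x by (simp_all add: Zp_def)
  ultimately show ?thesis
    using hi.bar_Kb_typical[OF extend_Zp[OF g gc]] lo.bar_Kb_typical[OF g]
    by (simp add: Kb_apply extend_eq_iff)
qed

context
  fixes g x :: "int \<Rightarrow> int" and c :: int
  assumes g: "g \<in> Zp m n" and x: "x \<in> Zp m n"
    and gc: "\<forall>t\<in>Tset n g. t < c" and xc: "\<forall>t\<in>Tset n x. t < c"
    and IH: "\<And>g' z c'. g' \<in> Zp m n \<Longrightarrow> z \<in> Zp m n \<Longrightarrow> \<forall>t\<in>Tset n g'. t < c' \<Longrightarrow>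
      \<forall>t\<in>Tset n z. t < c' \<Longrightarrow> descent_rank m n g' z c' < descent_rank m n g x c \<Longrightarrow>
      psi_hi (Kb (extend n g' c')) (extend n z c') = psi_lo (Kb g') z"
begin

lemma coeff_extend_top_atypical_F:
  assumes cS: "c \<in> Sset m g" and STg: "Sset m g \<inter> Tset n g = {}" and c1: "c - 1 \<in> Tset n g"
  shows "psi_hi (Kb (extend n g c)) (extend n x c) = psi_lo (Kb g) x"
proof -
  define g' where "g' = replV m g c (c - 1)"
  have c1S: "c - 1 \<notin> Sset m g" using STg c1 by auto
  have g': "g' \<in> Zp m n" unfolding g'_def using replV_Zp[OF g c1S] by simp
  have g'c: "\<forall>t\<in>Tset n g'. t < c" using gc by (simp add: g'_def)
  have "psi_hi (Kb (extend n g c)) = Fop m (Suc n) (c - 1) (psi_hi (Kb (extend n g' c)))"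
    using hi.bar_Kb_F_recursion[OF extend_Zp[OF g gc], of "c - 1"] cS c1S c1
    by (simp add: replV_extend g'_def)
  then have hi: "psi_hi (Kb (extend n g c)) (extend n x c) = (if c \<in> Sset m x \<and> c - 1 \<notin> Sset m x
      then psi_hi (Kb (extend n g' c)) (extend n (replV m x c (c - 1)) c) else 0)"
    using Fop_extend_top[OF x xc] by simp
  have "psi_lo (Kb g') z = 0" if "c \<in> Tset n z" for z
  proof -
    obtain k where "k \<in> posI n" "z k = c" using \<open>c \<in> Tset n z\<close> by (auto simp: Tset_def)
    moreover have "\<forall>k\<in>posI n. g' k \<le> c - 1" using g'c by (auto simp: Tset_def)
    ultimately show ?thesis using lo.bar_Kb_posI_gt[OF g', of "c - 1" k z] by simp
  qed
  moreover have "psi_lo (Kb g) = Fop m n (c - 1) (psi_lo (Kb g'))"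
    using lo.bar_Kb_F_recursion[OF g, of "c - 1"] cS c1S c1 by (simp add: g'_def)
  ultimately have lo: "psi_lo (Kb g) x = (if c \<in> Sset m x \<and> c - 1 \<notin> Sset m x
      then psi_lo (Kb g') (replV m x c (c - 1)) else 0)"
    using Fop_top_vanishing[OF x] by simp
  show ?thesis
  proof (cases "c \<in> Sset m x \<and> c - 1 \<notin> Sset m x")
    case True
    define x' where "x' = replV m x c (c - 1)"
    have x': "x' \<in> Zp m n" using True replV_Zp[OF x] by (simp add: x'_def)
    have "Sset m g \<inter> insert c (Tset n g) = {c}" using STg cS by auto
    then have "atyp_measure (Sset m g') (insert c (Tset n g')) < atyp_measure (Sset m g) (insert c (Tset n g))"
      using atyp_measure_replV_min[of m g c n c] c1S by (simp add: g'_def)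
    moreover have "weight m n g' - weight m n x' = weight m n g - weight m n x"
      using weight_replV[OF g cS] weight_replV[OF x] True by (simp add: g'_def x'_def)
    ultimately have "descent_rank m n g' x' c < descent_rank m n g x c"
      by (simp add: descent_rank_def)
    then show ?thesis using IH[OF g' x' g'c] xc hi lo True by (simp add: x'_def)
  next
    case False
    show ?thesis unfolding hi lo if_not_P[OF False] ..
  qed
qed

lemma coeff_extend_top_atypical_E:
  assumes cS: "c \<in> Sset m g" and STg: "Sset m g \<inter> Tset n g = {}" and c1: "c - 1 \<notin> Tset n g"
  shows "psi_hi (Kb (extend n g c)) (extend n x c) = psi_lo (Kb g) x"
proof -
  have gc1: "\<forall>t\<in>Tset n g. t < c - 1"
    using gc c1 by (metis order_le_less zle_diff1_eq)
  have cT: "c \<notin> Tset n g" using gc by auto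
  have below: "psi_hi (Kb (extend n h (c - 1))) (extend n z c) = 0"
    if h: "h \<in> Zp m n" "\<forall>t\<in>Tset n h. t < c - 1" for h z
  proof -
    have "\<forall>k\<in>posI (Suc n). extend n h (c - 1) k \<le> c - 1"
      using h(2) by (auto simp: posI_Suc extend_def Tset_def)
    then show ?thesis
      using hi.bar_Kb_posI_gt[OF extend_Zp[OF h], of "c - 1" "int n + 1"] by (simp add: posI_def extend_def)
  qed
  have "psi_hi (Kb (extend n (replV m g c (c - 1)) (c - 1))) (extend n x c) = 0"
    if "c - 1 \<notin> Sset m g"
    using below replV_Zp[OF g that] gc1 by simp
  then have "psi_hi (Kb (extend n g c)) (extend n x c) =
      Eop m (Suc n) (c - 1) (psi_hi (Kb (extend n g (c - 1)))) (extend n x c)"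
    using hi.bar_Kb_E_recursion[OF extend_Zp[OF g gc], of "c - 1"] cT c1
    by (simp add: replW_extend_top replV_extend)
  then have hi: "psi_hi (Kb (extend n g c)) (extend n x c) =
      (if c - 1 \<in> Tset n x then 0 else psi_hi (Kb (extend n g (c - 1))) (extend n x (c - 1)))"
    using Eop_extend_top[OF x xc] below[OF g gc1] by simp
  show ?thesis
  proof (cases "c - 1 \<in> Tset n x")
    case True
    then obtain k where "k \<in> posI n" "x k = c - 1" by (auto simp: Tset_def)
    moreover have "\<forall>k\<in>posI n. g k \<le> c - 2" using gc1 by (force simp: Tset_def)
    ultimately show ?thesis using hi True lo.bar_Kb_posI_gt[OF g, of "c - 2" k x] by simp
  next
    case False
    have xc1: "\<forall>t\<in>Tset n x. t < c - 1"
      using xc False by (metis order_le_less zle_diff1_eq)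
    have "Sset m g \<inter> insert c (Tset n g) = {c}" using STg cS by auto
    moreover have "insert (c - 1) (Tset n g) = insert (c - 1) (insert c (Tset n g) - {c})" using cT by auto
    ultimately have "atyp_measure (Sset m g) (insert (c - 1) (Tset n g)) < atyp_measure (Sset m g) (insert c (Tset n g))"
      using atyp_measure_shift_min'[of "Sset m g" "insert c (Tset n g)" c] c1 by simp
    then have "descent_rank m n g x (c - 1) < descent_rank m n g x c"
      by (simp add: descent_rank_def)
    then show ?thesis using IH[OF g x gc1 xc1] hi False by simp
  qed
qed

lemma coeff_extend_min_atypical_F:
  assumes ne: "Sset m g \<inter> insert c (Tset n g) \<noteq> {}" and b: "b = Min (Sset m g \<inter> insert c (Tset n g))"
    and bc: "b < c" and b1: "b - 1 \<in> Tset n g"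
  shows "psi_hi (Kb (extend n g c)) (extend n x c) = psi_lo (Kb g) x"
proof -
  have bS: "b \<in> Sset m g" and "b \<in> insert c (Tset n g)" using Min_in[OF _ ne] b by auto
  have b1S: "b - 1 \<notin> Sset m g"
    using Min_le[of "Sset m g \<inter> insert c (Tset n g)" "b - 1"] b b1 by auto
  define g' where "g' = replV m g b (b - 1)"
  have g': "g' \<in> Zp m n" unfolding g'_def using replV_Zp[OF g b1S] by simp
  have g'c: "\<forall>t\<in>Tset n g'. t < c" using gc by (simp add: g'_def)
  have "psi_hi (Kb (extend n g c)) = Fop m (Suc n) (b - 1) (psi_hi (Kb (extend n g' c)))"
    using hi.bar_Kb_F_recursion[OF extend_Zp[OF g gc], of "b - 1"] bS b1S b1
    by (simp add: replV_extend g'_def)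
  then have hi: "psi_hi (Kb (extend n g c)) (extend n x c) =
      Fop m n (b - 1) (\<lambda>z. psi_hi (Kb (extend n g' c)) (extend n z c)) x"
    using Fop_extend[OF x xc] bc by simp
  have lo: "psi_lo (Kb g) = Fop m n (b - 1) (psi_lo (Kb g'))"
    using lo.bar_Kb_F_recursion[OF g, of "b - 1"] bS b1S b1 by (simp add: g'_def)
  have weight_g': "weight m n g' = weight m n g - 1"
    using weight_replV[OF g bS] by (simp add: g'_def)
  show ?thesis unfolding hi lo
  proof (rule Fop_cong)
    assume "b - 1 + 1 \<in> Sset m x" "b - 1 \<notin> Sset m x"
    then have xb: "b \<in> Sset m x" "b - 1 \<notin> Sset m x" by simp_all
    define z where "z = replV m x b (b - 1)"
    have z: "z \<in> Zp m n" unfolding z_def using replV_Zp[OF x xb(2)] by simp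
    have "descent_rank m n g' z c < descent_rank m n g x c"
      using weight_g' weight_replV[OF x xb(1)] atyp_measure_replV_min[OF ne b b1S]
      by (simp add: descent_rank_def z_def g'_def)
    then show "psi_hi (Kb (extend n g' c)) (extend n (replV m x (b - 1 + 1) (b - 1)) c) =
        psi_lo (Kb g') (replV m x (b - 1 + 1) (b - 1))"
      using IH[OF g' z g'c] xc by (simp add: z_def)
  next
    assume xb: "b - 1 \<in> Tset n x" "b - 1 + 1 \<notin> Tset n x"
    define z where "z = replW n x (b - 1) b"
    have z: "z \<in> Zp m n" unfolding z_def using replW_Zp[OF x] xb(2) by simp
    have zc: "\<forall>t\<in>Tset n z. t < c" using xc bc by (auto simp: z_def Tset_replW[OF xb(1)])
    have "descent_rank m n g' z c < descent_rank m n g x c"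
      using weight_g' weight_replW[OF x xb(1)] by (simp add: descent_rank_def z_def)
    then show "psi_hi (Kb (extend n g' c)) (extend n (replW n x (b - 1) (b - 1 + 1)) c) =
        psi_lo (Kb g') (replW n x (b - 1) (b - 1 + 1))"
      using IH[OF g' z g'c zc] by (simp add: z_def)
  qed
qed

lemma Eop_coeff_extend_min_atypical:
  assumes ne: "Sset m g \<inter> insert c (Tset n g) \<noteq> {}" and b: "b = Min (Sset m g \<inter> insert c (Tset n g))"
    and bc: "b < c" and b1: "b - 1 \<notin> Tset n g"
  defines "g' \<equiv> replW n g b (b - 1)"
  shows "Eop m n (b - 1) (\<lambda>z. psi_hi (Kb (extend n g' c)) (extend n z c)) x =
    Eop m n (b - 1) (psi_lo (Kb g')) x"
proof -
  have bT: "b \<in> Tset n g" using Min_in[OF _ ne] b bc by auto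
  have g': "g' \<in> Zp m n" unfolding g'_def using replW_Zp[OF g b1] by simp
  have g'c: "\<forall>t\<in>Tset n g'. t < c" using gc bc by (auto simp: g'_def Tset_replW[OF bT])
  have weight_g': "weight m n g' = weight m n g - 1"
    using weight_replW[OF g bT] by (simp add: g'_def)
  show ?thesis
  proof (rule Eop_cong)
    assume "b - 1 + 1 \<in> Tset n x" "b - 1 \<notin> Tset n x"
    then have xb: "b \<in> Tset n x" "b - 1 \<notin> Tset n x" by simp_all
    define z where "z = replW n x b (b - 1)"
    have z: "z \<in> Zp m n" unfolding z_def using replW_Zp[OF x xb(2)] by simp
    have zc: "\<forall>t\<in>Tset n z. t < c" using xc bc by (auto simp: z_def Tset_replW[OF xb(1)])
    have "descent_rank m n g' z c < descent_rank m n g x c"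
      using weight_g' weight_replW[OF x xb(1)] atyp_measure_replW_min[OF ne b] b1 bc
      by (simp add: descent_rank_def z_def g'_def)
    then show "psi_hi (Kb (extend n g' c)) (extend n (replW n x (b - 1 + 1) (b - 1)) c) =
        psi_lo (Kb g') (replW n x (b - 1 + 1) (b - 1))"
      using IH[OF g' z g'c zc] by (simp add: z_def)
  next
    assume xb: "b - 1 \<in> Sset m x" "b - 1 + 1 \<notin> Sset m x"
    define z where "z = replV m x (b - 1) b"
    have z: "z \<in> Zp m n" unfolding z_def using replV_Zp[OF x] xb(2) by simp
    have "descent_rank m n g' z c < descent_rank m n g x c"
      using weight_g' weight_replV[OF x xb(1)] by (simp add: descent_rank_def z_def)
    then show "psi_hi (Kb (extend n g' c)) (extend n (replV m x (b - 1) (b - 1 + 1)) c) =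
        psi_lo (Kb g') (replV m x (b - 1) (b - 1 + 1))"
      using IH[OF g' z g'c] xc by (simp add: z_def)
  qed
qed

lemma coeff_extend_min_atypical_E:
  assumes ne: "Sset m g \<inter> insert c (Tset n g) \<noteq> {}" and b: "b = Min (Sset m g \<inter> insert c (Tset n g))"
    and bc: "b < c" and b1: "b - 1 \<notin> Tset n g"
  shows "psi_hi (Kb (extend n g c)) (extend n x c) = psi_lo (Kb g) x"
proof -
  define g' where "g' = replW n g b (b - 1)"
  have bT: "b \<in> Tset n g" using Min_in[OF _ ne] b bc by auto
  have g': "g' \<in> Zp m n" unfolding g'_def using replW_Zp[OF g b1] by simp
  have hi: "psi_hi (Kb (extend n g c)) (extend n x c) =
      Eop m n (b - 1) (\<lambda>z. psi_hi (Kb (extend n g' c)) (extend n z c)) x -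
      (if b \<in> Sset m g \<and> b - 1 \<notin> Sset m g
       then qbar qvar * psi_hi (Kb (extend n (replV m g' b (b - 1)) c)) (extend n x c) else 0)"
    using hi.bar_Kb_E_recursion[OF extend_Zp[OF g gc], of "b - 1" "extend n x c"] bT b1 bc
    by (simp add: replW_extend replV_extend Eop_extend[OF x xc] g'_def)
  have lo: "psi_lo (Kb g) x = Eop m n (b - 1) (psi_lo (Kb g')) x -
      (if b \<in> Sset m g \<and> b - 1 \<notin> Sset m g
       then qbar qvar * psi_lo (Kb (replV m g' b (b - 1))) x else 0)"
    using lo.bar_Kb_E_recursion[OF g, of "b - 1" x] bT b1 by (simp add: g'_def)
  have "psi_hi (Kb (extend n (replV m g' b (b - 1)) c)) (extend n x c) = psi_lo (Kb (replV m g' b (b - 1))) x"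
    if bS: "b \<in> Sset m g" "b - 1 \<notin> Sset m g"
  proof (rule IH[OF _ x _ xc])
    define g'' where "g'' = replV m g' b (b - 1)"
    show "g'' \<in> Zp m n" using replV_Zp[OF g'] bS by (simp add: g''_def g'_def)
    show "\<forall>t\<in>Tset n g''. t < c" using gc bc by (auto simp: g''_def g'_def Tset_replW[OF bT])
    have "weight m n g'' = weight m n g - 2"
      using weight_replV[OF g', of b "b - 1"] weight_replW[OF g bT, of "b - 1"] bS by (simp add: g''_def g'_def)
    then show "descent_rank m n g'' x c < descent_rank m n g x c" by (simp add: descent_rank_def)
  qed
  then show ?thesis
    using hi lo Eop_coeff_extend_min_atypical[OF ne b bc b1] by (simp add: g'_def)
qed

lemma coeff_extend_step: "psi_hi (Kb (extend n g c)) (extend n x c) = psi_lo (Kb g) x"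
proof (cases "Sset m g \<inter> insert c (Tset n g) = {}")
  case True
  then show ?thesis using coeff_extend_typical[OF g x gc] by simp
next
  case False
  note ne = False
  define b where "b = Min (Sset m g \<inter> insert c (Tset n g))"
  have bX: "b \<in> Sset m g \<inter> insert c (Tset n g)" and bmin: "\<And>y. y \<in> Sset m g \<inter> insert c (Tset n g) \<Longrightarrow> b \<le> y"
    using Min_in[OF _ ne] Min_le by (simp_all add: b_def)
  show ?thesis
  proof (cases "b = c")
    case True
    then have cS: "c \<in> Sset m g" and STg: "Sset m g \<inter> Tset n g = {}"
      using bX bmin gc by fastforce+
    then show ?thesis
      using coeff_extend_top_atypical_F coeff_extend_top_atypical_E by blast
  next
    case False
    then have "b < c" using bX gc by auto
    then show ?thesis
      using coeff_extend_min_atypical_F[OF ne b_def] coeff_extend_min_atypical_E[OF ne b_def] by blast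
  qed
qed

end

lemma coeff_extend:
  assumes "g \<in> Zp m n" "x \<in> Zp m n" "\<forall>t\<in>Tset n g. t < c" "\<forall>t\<in>Tset n x. t < c"
  shows "psi_hi (Kb (extend n g c)) (extend n x c) = psi_lo (Kb g) x"
  using assms
proof (induction "(nat (weight m n g - weight m n x), atyp_measure (Sset m g) (insert c (Tset n g)))"
    arbitrary: g x c rule: less_induct)
  case (less g x c)
  note g = less.prems(1) and x = less.prems(2) and gc = less.prems(3) and xc = less.prems(4)
  have IH: "psi_hi (Kb (extend n g' c')) (extend n z c') = psi_lo (Kb g') z"
    if "g' \<in> Zp m n" "z \<in> Zp m n" "\<forall>t\<in>Tset n g'. t < c'" "\<forall>t\<in>Tset n z. t < c'"
      and less: "descent_rank m n g' z c' < descent_rank m n g x c" for g' z c'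
  proof (cases "weight m n z > weight m n g'")
    case True
    \<comment> \<open>the weight difference is not bounded below, but such pairs have both coefficients zero\<close>
    then show ?thesis using coeff_extend_weight_gt that by blast
  next
    case False
    with less have "(nat (weight m n g' - weight m n z), atyp_measure (Sset m g') (insert c' (Tset n g')))
        < (nat (weight m n g - weight m n x), atyp_measure (Sset m g) (insert c (Tset n g)))"
      by (auto simp: descent_rank_def)
    then show ?thesis using less.hyps that by blast
  qed
  show ?case by (rule coeff_extend_step[OF g x gc xc]) (rule IH)
qed

end

section \<open>Truncation\<close>

lemma truncation_apply:
  "truncation m n u g = (if g \<in> Zpp m n then u (extend n g (int n + 1)) else 0)"
  by (simp add: truncation_def extend_def)

lemma Zpp_iff_Tset_le:
  assumes g: "g \<in> Zp m n"
  shows "g \<in> Zpp m n \<longleftrightarrow> (\<forall>t\<in>Tset n g. t \<le> int n)"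
proof
  show "g \<in> Zpp m n \<Longrightarrow> \<forall>t\<in>Tset n g. t \<le> int n"
    using Zpp_posI_le by (auto simp: Tset_def)
next
  assume le: "\<forall>t\<in>Tset n g. t \<le> int n"
  show "g \<in> Zpp m n"
  proof (cases "n = 0")
    case True
    then have "g 0 = 0" using g by (simp add: Zp_def Zfun_def Iset_def posI_def negI_def)
    then show ?thesis using g True by (simp add: Zpp_def)
  next
    case False
    then have "g (int n) \<in> Tset n g" by (simp add: Tset_def posI_def)
    then show ?thesis using g le by (simp add: Zpp_def)
  qed
qed

lemma Zpp_Tset_less: "g \<in> Zpp m n \<Longrightarrow> \<forall>t\<in>Tset n g. t < int n + 1"
  using Zpp_iff_Tset_le[of g m n] by (auto simp: Zpp_def)

lemma truncation_in_Ehat: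
  assumes u: "u \<in> Ehat m (Suc n)"
  shows "truncation m n u \<in> Ehat m n"
  unfolding Ehat_def
proof (intro CollectI conjI allI impI)
  fix f assume "f \<notin> Zp m n"
  then show "truncation m n u f = 0" by (simp add: truncation_apply Zpp_def)
next
  fix d :: nat
  have "{f. truncation m n u f \<noteq> 0 \<and> (\<forall>i\<in>posI n. f i \<ge> - int d)}
      \<subseteq> (\<lambda>f. extend n f (int n + 1)) -` support_above (Suc n) u d \<inter> Zfun m n"
    by (auto simp: truncation_apply support_above_def posI_Suc extend_def Zpp_def Zp_def split: if_splits)
  then show "finite {f. truncation m n u f \<noteq> 0 \<and> (\<forall>i\<in>posI n. f i \<ge> - int d)}"
    using finite_vimage_IntI[OF finite_support_above[OF u] inj_on_extend] by (rule finite_subset)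
qed

lemma extend_support_above_truncation:
  assumes u: "u \<in> Ehatp m (Suc n)"
  shows "(\<lambda>f. extend n f (int n + 1)) ` support_above n (truncation m n u) D =
    {f \<in> support_above (Suc n) u D. f (int n + 1) = int n + 1}"
proof (intro equalityI subsetI)
  fix f assume "f \<in> (\<lambda>f. extend n f (int n + 1)) ` support_above n (truncation m n u) D"
  then show "f \<in> {f \<in> support_above (Suc n) u D. f (int n + 1) = int n + 1}"
    by (auto simp: support_above_def truncation_apply posI_Suc extend_def split: if_splits)
next
  fix f assume f: "f \<in> {f \<in> support_above (Suc n) u D. f (int n + 1) = int n + 1}"
  then have "f \<in> Zp m (Suc n)" using u by (auto simp: support_above_def Ehatp_def Zpp_def)
  then obtain g where g: "g \<in> Zp m n" "\<forall>t\<in>Tset n g. t < int n + 1" "f = extend n g (int n + 1)"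
    using f by (auto elim: Zp_Suc_eq_extend)
  then have "g \<in> Zpp m n" using Zpp_iff_Tset_le by force
  moreover have "\<forall>i\<in>posI n. - int D \<le> g i"
  proof
    fix i assume i: "i \<in> posI n"
    then have "f i = g i" using g(3) by (auto simp: extend_def)
    then show "- int D \<le> g i" using f i by (auto simp: support_above_def posI_Suc)
  qed
  ultimately have "g \<in> support_above n (truncation m n u) D"
    using f g(3) by (simp add: support_above_def truncation_apply)
  then show "f \<in> (\<lambda>f. extend n f (int n + 1)) ` support_above n (truncation m n u) D"
    using g(3) by blast
qed

context bar_involution
begin

lemma bar_vanishes_above:
  assumes u: "u \<in> Ehat m N" and supp: "\<And>f. u f \<noteq> 0 \<Longrightarrow> \<forall>k\<in>posI N. f k \<le> v"
    and y: "k \<in> posI N" "y k > v"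
  shows "psi u y = 0"
proof -
  obtain D0 where "\<And>D. D \<ge> D0 \<Longrightarrow> psi u y = (\<Sum>f\<in>support_above N u D. qbar (u f) * psi (Kb f) y)"
    using bar_coeff_expansion[OF u] by blast
  then have "psi u y = (\<Sum>f\<in>support_above N u D0. qbar (u f) * psi (Kb f) y)" by simp
  also have "\<dots> = 0"
  proof (rule sum.neutral, rule ballI)
    fix f assume f: "f \<in> support_above N u D0"
    then have "f \<in> Zp m N" and uf: "u f \<noteq> 0"
      using support_above_subset_Zp[OF u] by (auto simp: support_above_def)
    then show "qbar (u f) * psi (Kb f) y = 0" using bar_Kb_posI_gt[of f v k y, OF \<open>f \<in> Zp m N\<close> supp[OF uf] y] by simp
  qed
  finally show ?thesis .
qed

end

context bar_involution_pair
begin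

lemma bar_truncation_coeff_Zpp:
  assumes u: "u \<in> Ehatp m (Suc n)" and y: "y \<in> Zpp m n"
  shows "psi_hi u (extend n y (int n + 1)) = psi_lo (truncation m n u) y"
proof -
  define Tu where "Tu = truncation m n u"
  define lift where "lift = (\<lambda>f. extend n f (int n + 1))"
  have uE: "u \<in> Ehat m (Suc n)" using u by (simp add: Ehatp_def)
  have TuE: "Tu \<in> Ehat m n" unfolding Tu_def using truncation_in_Ehat[OF uE] .
  obtain D1 where D1: "\<And>D. D \<ge> D1 \<Longrightarrow> psi_hi u (lift y) =
      (\<Sum>f\<in>support_above (Suc n) u D. qbar (u f) * psi_hi (Kb f) (lift y))"
    using hi.bar_coeff_expansion[OF uE] by blast
  obtain D2 where D2: "\<And>D. D \<ge> D2 \<Longrightarrow> psi_lo Tu y =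
      (\<Sum>f\<in>support_above n Tu D. qbar (Tu f) * psi_lo (Kb f) y)"
    using lo.bar_coeff_expansion[OF TuE] by blast
  define D where "D = max D1 D2"
  define A where "A = support_above (Suc n) u D"
  have image: "lift ` support_above n Tu D = {f \<in> A. f (int n + 1) = int n + 1}"
    unfolding A_def Tu_def lift_def using extend_support_above_truncation[OF u] .
  have vanish: "psi_hi (Kb f) (lift y) = 0" if "f \<in> A" "f (int n + 1) \<noteq> int n + 1" for f
  proof (rule hi.bar_Kb_last_less)
    have "f \<in> Zpp m (Suc n)" using that u by (auto simp: A_def support_above_def Ehatp_def)
    then show "f \<in> Zp m (Suc n)" "f (int (Suc n)) < int (Suc n)"
      using that(2) by (auto simp: Zpp_def add.commute)
  qed (simp_all add: lift_def extend_def add.commute)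
  have "psi_hi u (lift y) = (\<Sum>f\<in>A. qbar (u f) * psi_hi (Kb f) (lift y))"
    using D1[of D] by (simp add: A_def D_def)
  also have "\<dots> = (\<Sum>f\<in>lift ` support_above n Tu D. qbar (u f) * psi_hi (Kb f) (lift y))"
    unfolding image using vanish by (intro sum.mono_neutral_right) (auto simp: A_def finite_support_above[OF uE])
  also have "\<dots> = (\<Sum>f\<in>support_above n Tu D. qbar (u (lift f)) * psi_hi (Kb (lift f)) (lift y))"
  proof (rule sum.reindex[unfolded comp_def])
    have "support_above n Tu D \<subseteq> Zfun m n"
      using support_above_subset_Zp[OF TuE] by (auto simp: Zp_def)
    then show "inj_on lift (support_above n Tu D)"
      unfolding lift_def by (rule inj_on_subset[OF inj_on_extend])
  qed
  also have "\<dots> = (\<Sum>f\<in>support_above n Tu D. qbar (Tu f) * psi_lo (Kb f) y)"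
  proof (rule sum.cong[OF refl])
    fix f assume "f \<in> support_above n Tu D"
    then have f: "f \<in> Zpp m n" by (auto simp: support_above_def Tu_def truncation_apply split: if_splits)
    then have "psi_hi (Kb (lift f)) (lift y) = psi_lo (Kb f) y"
      using coeff_extend[of f y "int n + 1"] y Zpp_Tset_less by (simp add: Zpp_def lift_def)
    then show "qbar (u (lift f)) * psi_hi (Kb (lift f)) (lift y) = qbar (Tu f) * psi_lo (Kb f) y"
      using f by (simp add: Tu_def truncation_apply lift_def)
  qed
  also have "\<dots> = psi_lo Tu y" using D2[of D] by (simp add: D_def)
  finally show ?thesis by (simp add: Tu_def lift_def)
qed

lemma bar_truncation_not_Zpp:
  assumes u: "u \<in> Ehatp m (Suc n)" and y: "y \<in> Zp m n" "y \<notin> Zpp m n"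
  shows "psi_lo (truncation m n u) y = 0"
proof -
  have yn: "y (int n) > int n" using y by (simp add: Zpp_def)
  have "n \<noteq> 0"
  proof
    assume "n = 0"
    then have "y (int n) = 0" using y by (simp add: Zp_def Zfun_def Iset_def posI_def negI_def)
    then show False using yn \<open>n = 0\<close> by simp
  qed
  show ?thesis
  proof (rule lo.bar_vanishes_above[OF truncation_in_Ehat, where v = "int n" and k = "int n"])
    show "u \<in> Ehat m (Suc n)" using u by (simp add: Ehatp_def)
    show "\<forall>k\<in>posI n. f k \<le> int n" if "truncation m n u f \<noteq> 0" for f
      using that Zpp_posI_le by (auto simp: truncation_apply split: if_splits)
    show "int n \<in> posI n" using \<open>n \<noteq> 0\<close> by (simp add: posI_def)
  qed (rule yn)
qed

end

theorem proposition2p8: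
  fixes m n :: nat
    and psi_hi psi_lo :: "fsum \<Rightarrow> fsum"
  assumes "is_bar_involution m (Suc n) psi_hi"
    and "is_bar_involution m n psi_lo"
    and "u \<in> Ehatp m (Suc n)"
  shows "truncation m n (psi_hi u) = psi_lo (truncation m n u)"
proof
  interpret bar_involution_pair m n psi_hi psi_lo
    using assms(1,2) by (simp add: bar_involution_pair_def bar_involution_def)
  fix y
  consider "y \<in> Zpp m n" | "y \<in> Zp m n" "y \<notin> Zpp m n" | "y \<notin> Zp m n"
    by (auto simp: Zpp_def)
  then show "truncation m n (psi_hi u) y = psi_lo (truncation m n u) y"
  proof cases
    case 1
    then show ?thesis using bar_truncation_coeff_Zpp[OF assms(3)] by (simp add: truncation_apply)
  next
    case 2
    then show ?thesis using bar_truncation_not_Zpp[OF assms(3)] by (simp add: truncation_apply)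
  next
    case 3
    have "psi_lo (truncation m n u) \<in> Ehat m n"
      using assms(3) by (simp add: lo.bar_Ehat truncation_in_Ehat Ehatp_def)
    then show ?thesis using 3 by (simp add: truncation_apply Ehat_def Zpp_def)
  qed
qed

end
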